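(* For every $f\in C(G)$ with $\int_G f\,d\mu=0$ there exists a unique derivation $\delta_f:\mathcal{B}\to B$ such that $\delta_f(V)=VM_f$, $\delta_f(V^{-1})=-M_fV^{-1}$, and $\delta_f(M_g)=0$ for all $g\in\mathcal F$. Moreover $\delta_f$ is approximately inner and invariant.
   Context: Setup: $G$ is an infinite compact (Hausdorff) abelian group, written additively, with normalized Haar measure $\mu$, and $x_1\in G$ generates a dense cyclic subgroup; $x_n=nx_1$. $\widehat G$ is the group of continuous characters and $\mathcal{F}$ their linear span. Let $H=\ell^2(\mathbb{Z})$ with canonical basis $\{E_l\}$; $VE_l=E_{l+1}$, $M_fE_l=f(x_l)E_l$, $\mathbb{L}E_l=lE_l$. $B=C^*(V,M_f:f\in C(G))$, $\mathcal{B}$ is the $*$-subalgebra generated by $V,V^{-1},M_\chi$ ($\chi\in\widehat G$). A derivation $\delta:\mathcal B\to B$ (linear, Leibniz) is invariant if $e^{-i\theta\mathbb L}\delta(e^{i\theta\mathbb L}be^{-i\theta\mathbb L})e^{i\theta\mathbb L}=\delta(b)$ for all $\theta,b$, and approximately inner if $\delta(b)=\lim_j[y_j,b]$ in norm for some $y_j\in B$ and all $b\in\mathcal{B}$. *)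

theory Defs
  imports "HOL-Analysis.Analysis" "HOL-Probability.Probability"
begin

definition intmul :: "int \<Rightarrow> 'a::ab_group_add \<Rightarrow> 'a" where
  "intmul n x = (if 0 \<le> n then (\<Sum>_\<in>{..<nat n}. x) else - (\<Sum>_\<in>{..<nat (- n)}. x))"

definition haar_prob :: "'g::{topological_group_add, ab_group_add} measure \<Rightarrow> bool" where
  "haar_prob \<mu> \<longleftrightarrow> prob_space \<mu> \<and> sets \<mu> = sets borel \<and>
     (\<forall>a. \<forall>A\<in>sets \<mu>. emeasure \<mu> ((\<lambda>x. a + x) ` A) = emeasure \<mu> A)"

definition is_character :: "('g::{topological_group_add, ab_group_add} \<Rightarrow> complex) \<Rightarrow> bool" where
  "is_character ch \<longleftrightarrow> continuous_on UNIV ch \<and> (\<forall>a b. ch (a + b) = ch a * ch b) \<and>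
     (\<forall>a. cmod (ch a) = 1)"

definition trig_polys :: "('g::{topological_group_add, ab_group_add} \<Rightarrow> complex) set" where
  "trig_polys = {g. \<exists>S c. finite S \<and> (\<forall>ch\<in>S. is_character ch) \<and>
                        g = (\<lambda>x. \<Sum>ch\<in>S. c ch * ch x)}"

text \<open>A (bounded) operator T on l2(Z) is represented by its matrix
  A i j = <E_i, T E_j>.\<close>
type_synonym mat = "int \<Rightarrow> int \<Rightarrow> complex"

definition madd :: "mat \<Rightarrow> mat \<Rightarrow> mat" where
  "madd A B = (\<lambda>i j. A i j + B i j)"

definition msub :: "mat \<Rightarrow> mat \<Rightarrow> mat" where
  "msub A B = (\<lambda>i j. A i j - B i j)"

definition msmult :: "complex \<Rightarrow> mat \<Rightarrow> mat" where
  "msmult c A = (\<lambda>i j. c * A i j)"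

definition mmult :: "mat \<Rightarrow> mat \<Rightarrow> mat" where
  "mmult A B = (\<lambda>i j. infsum (\<lambda>k. A i k * B k j) UNIV)"

definition madj :: "mat \<Rightarrow> mat" where
  "madj A = (\<lambda>i j. cnj (A j i))"

definition mcomm :: "mat \<Rightarrow> mat \<Rightarrow> mat" where
  "mcomm Y A = msub (mmult Y A) (mmult A Y)"

definition opnorm_set :: "mat \<Rightarrow> real set" where
  "opnorm_set A = {cmod (\<Sum>i\<in>I. \<Sum>j\<in>J. cnj (y i) * A i j * x j) | I J x y.
      finite I \<and> finite J \<and> (\<Sum>j\<in>J. (cmod (x j))\<^sup>2) \<le> 1 \<and> (\<Sum>i\<in>I. (cmod (y i))\<^sup>2) \<le> 1}"

definition bounded_mat :: "mat \<Rightarrow> bool" where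
  "bounded_mat A \<longleftrightarrow> bdd_above (opnorm_set A)"

definition opnorm :: "mat \<Rightarrow> real" where
  "opnorm A = Sup (opnorm_set A)"

text \<open>The shift V E_l = E_(l+1), and its inverse.\<close>
definition Vop :: mat where
  "Vop = (\<lambda>i j. if i = j + 1 then 1 else 0)"

definition Vinv :: mat where
  "Vinv = (\<lambda>i j. if j = i + 1 then 1 else 0)"

text \<open>M_f E_l = f(x_l) E_l with x_l = l x_1.\<close>
definition Mop :: "'g::ab_group_add \<Rightarrow> ('g \<Rightarrow> complex) \<Rightarrow> mat" where
  "Mop x1 f = (\<lambda>i j. if i = j then f (intmul i x1) else 0)"

text \<open>exp(i theta L) E_l = exp(i theta l) E_l.\<close>
definition expL :: "real \<Rightarrow> mat" where
  "expL \<theta> = (\<lambda>i j. if i = j then exp (\<i> * complex_of_real \<theta> * of_int i) else 0)"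

inductive_set star_alg :: "mat set \<Rightarrow> mat set" for S :: "mat set" where
  gen: "A \<in> S \<Longrightarrow> A \<in> star_alg S"
| add: "A \<in> star_alg S \<Longrightarrow> B \<in> star_alg S \<Longrightarrow> madd A B \<in> star_alg S"
| smult: "A \<in> star_alg S \<Longrightarrow> msmult c A \<in> star_alg S"
| mult: "A \<in> star_alg S \<Longrightarrow> B \<in> star_alg S \<Longrightarrow> mmult A B \<in> star_alg S"
| adj: "A \<in> star_alg S \<Longrightarrow> madj A \<in> star_alg S"

definition cstar_alg :: "mat set \<Rightarrow> mat set" where
  "cstar_alg S = {A. bounded_mat A \<and> (\<exists>a. (\<forall>n. a n \<in> star_alg S) \<and>
                      (\<lambda>n. opnorm (msub (a n) A)) \<longlonglongrightarrow> 0)}"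

definition Balg :: "'g::{topological_group_add, ab_group_add} \<Rightarrow> mat set" where
  "Balg x1 = cstar_alg ({Vop} \<union> {Mop x1 f | f. continuous_on UNIV f})"

definition Bsmall :: "'g::{topological_group_add, ab_group_add} \<Rightarrow> mat set" where
  "Bsmall x1 = star_alg ({Vop, Vinv} \<union> {Mop x1 ch | ch. is_character ch})"

definition is_derivation :: "mat set \<Rightarrow> mat set \<Rightarrow> (mat \<Rightarrow> mat) \<Rightarrow> bool" where
  "is_derivation D E \<delta> \<longleftrightarrow>
     (\<forall>a\<in>D. \<delta> a \<in> E) \<and>
     (\<forall>a\<in>D. \<forall>b\<in>D. \<delta> (madd a b) = madd (\<delta> a) (\<delta> b)) \<and>
     (\<forall>c. \<forall>a\<in>D. \<delta> (msmult c a) = msmult c (\<delta> a)) \<and>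
     (\<forall>a\<in>D. \<forall>b\<in>D. \<delta> (mmult a b) = madd (mmult (\<delta> a) b) (mmult a (\<delta> b)))"

definition invariant_der :: "mat set \<Rightarrow> (mat \<Rightarrow> mat) \<Rightarrow> bool" where
  "invariant_der D \<delta> \<longleftrightarrow>
     (\<forall>\<theta>::real. \<forall>b\<in>D.
        mmult (mmult (expL (- \<theta>)) (\<delta> (mmult (mmult (expL \<theta>) b) (expL (- \<theta>))))) (expL \<theta>)
        = \<delta> b)"

definition approx_inner :: "mat set \<Rightarrow> mat set \<Rightarrow> (mat \<Rightarrow> mat) \<Rightarrow> bool" where
  "approx_inner D E \<delta> \<longleftrightarrow>
     (\<exists>y :: nat \<Rightarrow> mat. (\<forall>j. y j \<in> E) \<and>
        (\<forall>b\<in>D. (\<lambda>j. opnorm (msub (\<delta> b) (mcomm (y j) b))) \<longlonglongrightarrow> 0))"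

end

theory Submission
  imports Defs
begin

(* Let F be the discrete antiderivative of l \<mapsto> f(x_l), i.e. F(l+1) - F(l) = f(x_l). Then \<delta>_f is
   the commutator with the unbounded diagonal operator diag(F): it multiplies the (i,j) matrix
   entry by F(i) - F(j). This is linear, and Leibniz holds on band matrices, where matrix
   products are finite sums; all elements of the *-algebra generated by V, V^-1 and the M_\<chi>
   are band matrices. Conjugation by exp(i\<theta>L) multiplies entries by phases and commutes with
   \<delta>_f. For approximate innerness, \<integral>f = 0 and density of the orbit make the orbit averages
   (1/N) \<Sum>_{k<N} f(x + k x_1) uniformly small, and f minus such an average is a coboundary
   h(x + x_1) - h(x) with h \<in> C(G). Then \<delta>_f(b) - [M_h, b] multiplies entries by G(i) - G(j)
   with G having uniformly small increments, which is small in norm on band matrices. *)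

section \<open>Band matrices\<close>

definition banded :: "nat \<Rightarrow> mat \<Rightarrow> bool" where
  "banded K A \<longleftrightarrow> (\<forall>i j. int K < \<bar>i - j\<bar> \<longrightarrow> A i j = 0)"

definition entries_bounded :: "real \<Rightarrow> mat \<Rightarrow> bool" where
  "entries_bounded C A \<longleftrightarrow> (\<forall>i j. cmod (A i j) \<le> C)"

definition band_mat :: "mat \<Rightarrow> bool" where
  "band_mat A \<longleftrightarrow> (\<exists>K C. banded K A \<and> entries_bounded C A)"

lemma entries_bounded_nonneg: "entries_bounded C A \<Longrightarrow> 0 \<le> C"
  unfolding entries_bounded_def by (meson norm_ge_zero order_trans)

lemma mmult_banded_left:
  assumes "banded K A"
  shows "mmult A B i j = (\<Sum>k\<in>{i - int K..i + int K}. A i k * B k j)"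
proof -
  have "infsum (\<lambda>k. A i k * B k j) UNIV = infsum (\<lambda>k. A i k * B k j) {i - int K..i + int K}"
    by (rule infsum_cong_neutral) (use assms in \<open>auto simp: banded_def\<close>)
  then show ?thesis by (simp add: mmult_def)
qed

lemma mmult_diagonal_left:
  assumes "\<And>i j. i \<noteq> j \<Longrightarrow> D i j = 0"
  shows "mmult D B i j = D i i * B i j"
proof -
  have "infsum (\<lambda>k. D i k * B k j) UNIV = infsum (\<lambda>k. D i k * B k j) {i}"
    by (rule infsum_cong_neutral) (use assms in auto)
  then show ?thesis by (simp add: mmult_def)
qed

lemma mmult_diagonal_right:
  assumes "\<And>i j. i \<noteq> j \<Longrightarrow> D i j = 0"
  shows "mmult B D i j = B i j * D j j"
proof -
  have "infsum (\<lambda>k. B i k * D k j) UNIV = infsum (\<lambda>k. B i k * D k j) {j}"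
    by (rule infsum_cong_neutral) (use assms in auto)
  then show ?thesis by (simp add: mmult_def)
qed

lemma mmult_Mop_left: "mmult (Mop x1 g) B i j = g (intmul i x1) * B i j"
  by (subst mmult_diagonal_left) (auto simp: Mop_def)

lemma mmult_Mop_right: "mmult B (Mop x1 g) i j = B i j * g (intmul j x1)"
  by (subst mmult_diagonal_right) (auto simp: Mop_def)

lemma mmult_expL_left: "mmult (expL t) B i j = exp (\<i> * complex_of_real t * of_int i) * B i j"
  by (subst mmult_diagonal_left) (auto simp: expL_def)

lemma mmult_expL_right: "mmult B (expL t) i j = B i j * exp (\<i> * complex_of_real t * of_int j)"
  by (subst mmult_diagonal_right) (auto simp: expL_def)

lemma banded_mmult:
  assumes "banded K1 A" "banded K2 B"
  shows "banded (K1 + K2) (mmult A B)"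
  unfolding banded_def
proof (intro allI impI)
  fix i j assume ij: "int (K1 + K2) < \<bar>i - j\<bar>"
  have "A i k * B k j = 0" for k
  proof -
    have "int K1 < \<bar>i - k\<bar> \<or> int K2 < \<bar>k - j\<bar>" using ij by linarith
    then show ?thesis using assms by (auto simp: banded_def)
  qed
  then have "(\<lambda>k. A i k * B k j) = (\<lambda>_. 0)" by auto
  then show "mmult A B i j = 0" by (simp add: mmult_def)
qed

lemma entries_bounded_mmult:
  assumes "banded K A" "entries_bounded C1 A" "entries_bounded C2 B"
  shows "entries_bounded (real (2 * K + 1) * (C1 * C2)) (mmult A B)"
  unfolding entries_bounded_def
proof (intro allI)
  fix i j
  have C1: "0 \<le> C1" using assms(2) by (rule entries_bounded_nonneg)
  have "cmod (mmult A B i j) \<le> (\<Sum>k\<in>{i - int K..i + int K}. cmod (A i k * B k j))"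
    unfolding mmult_banded_left[OF assms(1)] by (rule norm_sum)
  also have "\<dots> \<le> (\<Sum>k\<in>{i - int K..i + int K}. C1 * C2)"
    using assms(2,3) C1 by (intro sum_mono) (auto simp: entries_bounded_def norm_mult intro!: mult_mono)
  also have "\<dots> = real (2 * K + 1) * (C1 * C2)" by simp
  finally show "cmod (mmult A B i j) \<le> real (2 * K + 1) * (C1 * C2)" .
qed

lemma band_mat_mmult: "band_mat A \<Longrightarrow> band_mat B \<Longrightarrow> band_mat (mmult A B)"
  unfolding band_mat_def using banded_mmult entries_bounded_mmult by blast

lemma band_mat_madd:
  assumes "band_mat A" "band_mat B"
  shows "band_mat (madd A B)"
proof -
  obtain K1 C1 K2 C2 where A: "banded K1 A" "entries_bounded C1 A"
    and B: "banded K2 B" "entries_bounded C2 B"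
    using assms by (auto simp: band_mat_def)
  have "banded (max K1 K2) (madd A B)" using A(1) B(1) by (auto simp: banded_def madd_def)
  moreover have "entries_bounded (C1 + C2) (madd A B)"
    using A(2) B(2) unfolding entries_bounded_def madd_def
    by (meson add_mono norm_triangle_ineq order_trans)
  ultimately show ?thesis by (auto simp: band_mat_def)
qed

lemma band_mat_msmult:
  assumes "band_mat A"
  shows "band_mat (msmult c A)"
proof -
  obtain K C where "banded K A" "entries_bounded C A" using assms by (auto simp: band_mat_def)
  then have "banded K (msmult c A)" "entries_bounded (cmod c * C) (msmult c A)"
    by (auto simp: banded_def entries_bounded_def msmult_def norm_mult intro: mult_left_mono)
  then show ?thesis by (auto simp: band_mat_def)
qed

lemma band_mat_madj:
  assumes "band_mat A"
  shows "band_mat (madj A)"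
proof -
  obtain K C where "banded K A" "entries_bounded C A" using assms by (auto simp: band_mat_def)
  then have "banded K (madj A)" "entries_bounded C (madj A)"
    by (auto simp: banded_def entries_bounded_def madj_def abs_minus_commute)
  then show ?thesis by (auto simp: band_mat_def)
qed

lemma band_mat_Vop: "band_mat Vop"
proof -
  have "banded 1 Vop" "entries_bounded 1 Vop" by (auto simp: banded_def entries_bounded_def Vop_def)
  then show ?thesis by (auto simp: band_mat_def)
qed

lemma band_mat_Mop:
  assumes "\<And>x. cmod (g x) \<le> B"
  shows "band_mat (Mop x1 g)"
proof -
  have "0 \<le> B" using assms by (meson norm_ge_zero order_trans)
  then have "banded 0 (Mop x1 g)" "entries_bounded B (Mop x1 g)"
    by (auto simp: banded_def entries_bounded_def Mop_def assms)
  then show ?thesis by (auto simp: band_mat_def)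
qed

lemma sum_near_diagonal_le:
  fixes a :: "int \<Rightarrow> real"
  assumes "finite I" "finite J" "\<And>i. 0 \<le> a i" "(\<Sum>i\<in>I. a i) \<le> 1"
  shows "(\<Sum>i\<in>I. \<Sum>j\<in>J. if \<bar>i - j\<bar> \<le> int K then a i else 0) \<le> real (2 * K + 1)"
proof -
  have card: "card {j\<in>J. \<bar>i - j\<bar> \<le> int K} \<le> 2 * K + 1" for i
  proof -
    have "card {j\<in>J. \<bar>i - j\<bar> \<le> int K} \<le> card {i - int K..i + int K}"
      by (intro card_mono) auto
    then show ?thesis by simp
  qed
  have "(\<Sum>i\<in>I. \<Sum>j\<in>J. if \<bar>i - j\<bar> \<le> int K then a i else 0)
      = (\<Sum>i\<in>I. a i * real (card {j\<in>J. \<bar>i - j\<bar> \<le> int K}))"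
    using assms(2) by (simp add: sum.If_cases mult.commute Int_def)
  also have "\<dots> \<le> (\<Sum>i\<in>I. a i * real (2 * K + 1))"
    using card assms(3) by (intro sum_mono mult_left_mono) (auto simp del: of_nat_Suc)
  also have "\<dots> \<le> 1 * real (2 * K + 1)"
    unfolding sum_distrib_right[symmetric] using assms(4) by (intro mult_right_mono) auto
  finally show ?thesis by simp
qed

text \<open>Schur test: each row and column of a band matrix has at most \<open>2K + 1\<close> nonzero
  entries, and \<open>|y_i A_ij x_j| \<le> C (|y_i|\<^sup>2 + |x_j|\<^sup>2) / 2\<close>.\<close>

lemma opnorm_set_le_banded:
  assumes "banded K A" "entries_bounded C A" "v \<in> opnorm_set A"
  shows "v \<le> real (2 * K + 1) * C"
proof -
  have C0: "0 \<le> C" using assms(2) by (rule entries_bounded_nonneg)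
  obtain I J x y where v: "v = cmod (\<Sum>i\<in>I. \<Sum>j\<in>J. cnj (y i) * A i j * x j)"
    and fin: "finite I" "finite J" and xs: "(\<Sum>j\<in>J. (cmod (x j))\<^sup>2) \<le> 1"
    and ys: "(\<Sum>i\<in>I. (cmod (y i))\<^sup>2) \<le> 1"
    using assms(3) unfolding opnorm_set_def by blast
  have entry: "cmod (cnj (y i) * A i j * x j) \<le>
      C / 2 * ((if \<bar>i - j\<bar> \<le> int K then (cmod (y i))\<^sup>2 else 0) +
               (if \<bar>j - i\<bar> \<le> int K then (cmod (x j))\<^sup>2 else 0))" for i j
  proof (cases "\<bar>i - j\<bar> \<le> int K")
    case True
    have "cmod (cnj (y i) * A i j * x j) = cmod (A i j) * (cmod (y i) * cmod (x j))"
      by (simp add: norm_mult)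
    also have "\<dots> \<le> C * (cmod (y i) * cmod (x j))"
      using assms(2) by (intro mult_right_mono) (auto simp: entries_bounded_def)
    also have "\<dots> \<le> C * (((cmod (y i))\<^sup>2 + (cmod (x j))\<^sup>2) / 2)"
      using C0 sum_squares_bound[of "cmod (y i)" "cmod (x j)"] by (intro mult_left_mono) auto
    finally show ?thesis using True by (simp add: abs_minus_commute)
  next
    case False
    then have "A i j = 0" using assms(1) by (auto simp: banded_def)
    then show ?thesis using False by (simp add: abs_minus_commute)
  qed
  have "v \<le> (\<Sum>i\<in>I. \<Sum>j\<in>J. cmod (cnj (y i) * A i j * x j))"
    unfolding v by (rule order_trans[OF norm_sum sum_mono[OF norm_sum]])
  also have "\<dots> \<le> (\<Sum>i\<in>I. \<Sum>j\<in>J. C / 2 * ((if \<bar>i - j\<bar> \<le> int K then (cmod (y i))\<^sup>2 else 0) +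
               (if \<bar>j - i\<bar> \<le> int K then (cmod (x j))\<^sup>2 else 0)))"
    by (intro sum_mono entry)
  also have "\<dots> = C / 2 * ((\<Sum>i\<in>I. \<Sum>j\<in>J. if \<bar>i - j\<bar> \<le> int K then (cmod (y i))\<^sup>2 else 0) +
       (\<Sum>j\<in>J. \<Sum>i\<in>I. if \<bar>j - i\<bar> \<le> int K then (cmod (x j))\<^sup>2 else 0))"
    by (simp add: sum_distrib_left sum.distrib sum.swap[of _ J I] distrib_left)
  also have "\<dots> \<le> C / 2 * (real (2 * K + 1) + real (2 * K + 1))"
    by (intro mult_left_mono add_mono sum_near_diagonal_le) (use fin xs ys C0 in auto)
  also have "\<dots> = real (2 * K + 1) * C" by simp
  finally show ?thesis .
qed

lemma zero_in_opnorm_set: "0 \<in> opnorm_set A"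
  unfolding opnorm_set_def by (rule CollectI, rule exI[of _ "{}"], rule exI[of _ "{}"]) simp

lemma bounded_mat_banded: "banded K A \<Longrightarrow> entries_bounded C A \<Longrightarrow> bounded_mat A"
  unfolding bounded_mat_def bdd_above_def using opnorm_set_le_banded by blast

lemma bounded_mat_band_mat: "band_mat A \<Longrightarrow> bounded_mat A"
  unfolding band_mat_def using bounded_mat_banded by blast

lemma opnorm_le_banded: "banded K A \<Longrightarrow> entries_bounded C A \<Longrightarrow> opnorm A \<le> real (2 * K + 1) * C"
  unfolding opnorm_def using opnorm_set_le_banded zero_in_opnorm_set by (intro cSup_least) blast+

lemma opnorm_nonneg: "bounded_mat A \<Longrightarrow> 0 \<le> opnorm A"
  unfolding opnorm_def bounded_mat_def using zero_in_opnorm_set by (rule cSup_upper2) auto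

lemma opnorm_zero: "opnorm (\<lambda>i j. 0) = 0"
proof -
  have "banded 0 (\<lambda>i j. 0)" "entries_bounded 0 (\<lambda>i j. 0)"
    by (auto simp: banded_def entries_bounded_def)
  then show ?thesis using opnorm_le_banded opnorm_nonneg bounded_mat_banded
    by (metis mult_zero_right order_antisym)
qed

section \<open>Commutators with unbounded diagonal operators\<close>

lemma intmul_add_one: "intmul (n + 1) x = intmul n x + x"
proof (cases "0 \<le> n")
  case True
  then obtain k where "n = int k" by (metis nonneg_eq_int)
  then show ?thesis by (simp add: intmul_def nat_add_distrib)
next
  case False
  then have "\<exists>k. n = - int (Suc k)" by presburger
  then obtain k where k: "n = - int (Suc k)" ..
  then show ?thesis by (cases k) (simp_all add: intmul_def nat_add_distrib)
qed

definition partial_sum :: "(int \<Rightarrow> 'a::ab_group_add) \<Rightarrow> int \<Rightarrow> 'a" where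
  "partial_sum c n = (if 0 \<le> n then (\<Sum>k\<in>{0..<n}. c k) else - (\<Sum>k\<in>{n..<0}. c k))"

lemma partial_sum_step: "partial_sum c (n + 1) - partial_sum c n = c n"
proof (cases "0 \<le> n")
  case True
  then have "{0..<n + 1} = insert n {0..<n}" by auto
  then show ?thesis using True by (simp add: partial_sum_def)
next
  case False
  then have "{n..<0} = insert n {n + 1..<0}" by auto
  then show ?thesis using False by (auto simp: partial_sum_def)
qed

lemma norm_diff_le_of_steps:
  fixes G :: "int \<Rightarrow> 'a::real_normed_vector"
  assumes "\<And>n. norm (G (n + 1) - G n) \<le> e"
  shows "norm (G i - G j) \<le> real_of_int \<bar>i - j\<bar> * e"
proof -
  have up: "norm (G (j + int m) - G j) \<le> real m * e" for j m
  proof (induction m)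
    case 0
    then show ?case by simp
  next
    case (Suc m)
    have "norm (G (j + int (Suc m)) - G j)
        \<le> norm (G (j + int m + 1) - G (j + int m)) + norm (G (j + int m) - G j)"
      using norm_triangle_ineq[of "G (j + int m + 1) - G (j + int m)" "G (j + int m) - G j"]
      by (simp add: ac_simps)
    also have "\<dots> \<le> e + real m * e" using assms Suc.IH by (intro add_mono)
    finally show ?case by (simp add: algebra_simps)
  qed
  show ?thesis
  proof (cases "j \<le> i")
    case True
    then obtain m where "i = j + int m" by (metis zle_iff_zadd)
    then show ?thesis using up[of j m] by simp
  next
    case False
    then obtain m where "j = i + int m" by (metis nle_le zle_iff_zadd)
    then show ?thesis using up[of i m] by (simp add: norm_minus_commute)
  qed
qed

text \<open>The commutator \<open>[diag F, b]\<close>, written entrywise because \<open>diag F\<close> need not be bounded.\<close>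

definition diag_der :: "(int \<Rightarrow> complex) \<Rightarrow> mat \<Rightarrow> mat" where
  "diag_der F b = (\<lambda>i j. (F i - F j) * b i j)"

lemma entries_bounded_diag_der:
  assumes "\<And>n. cmod (F (n + 1) - F n) \<le> e" "banded K b" "entries_bounded C b"
  shows "entries_bounded (real K * e * C) (diag_der F b)"
  unfolding entries_bounded_def
proof (intro allI)
  fix i j
  have e0: "0 \<le> e" using assms(1)[of 0] by (meson norm_ge_zero order_trans)
  have C0: "0 \<le> C" using assms(3) by (rule entries_bounded_nonneg)
  show "cmod (diag_der F b i j) \<le> real K * e * C"
  proof (cases "\<bar>i - j\<bar> \<le> int K")
    case True
    have "cmod (F i - F j) \<le> real_of_int \<bar>i - j\<bar> * e"
      using norm_diff_le_of_steps[of F e] assms(1) by blast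
    also have "\<dots> \<le> real K * e" using True e0 by (intro mult_right_mono) linarith+
    finally have "cmod (F i - F j) \<le> real K * e" .
    then show ?thesis using assms(3) e0 C0 unfolding diag_der_def norm_mult
      by (intro mult_mono) (auto simp: entries_bounded_def)
  next
    case False
    then show ?thesis using assms(2) e0 C0 by (simp add: diag_der_def banded_def)
  qed
qed

lemma diag_der_madd: "diag_der F (madd a b) = madd (diag_der F a) (diag_der F b)"
  by (auto simp: diag_der_def madd_def fun_eq_iff algebra_simps)

lemma diag_der_msmult: "diag_der F (msmult z a) = msmult z (diag_der F a)"
  by (auto simp: diag_der_def msmult_def fun_eq_iff algebra_simps)

lemma diag_der_mmult:
  assumes "banded K a"
  shows "diag_der F (mmult a b) = madd (mmult (diag_der F a) b) (mmult a (diag_der F b))"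
proof (intro ext)
  fix i j
  have "banded K (diag_der F a)" using assms by (auto simp: banded_def diag_der_def)
  then show "diag_der F (mmult a b) i j = madd (mmult (diag_der F a) b) (mmult a (diag_der F b)) i j"
    by (simp add: diag_der_def madd_def mmult_banded_left[OF assms] mmult_banded_left
        sum_distrib_left sum.distrib[symmetric] algebra_simps)
qed

lemma diag_der_Mop: "diag_der F (Mop x1 g) = (\<lambda>i j. 0)"
  by (auto simp: diag_der_def Mop_def fun_eq_iff)

lemma diag_der_Vop: "diag_der (partial_sum (\<lambda>n. f (intmul n x1))) Vop = mmult Vop (Mop x1 f)"
  using partial_sum_step[of "\<lambda>n. f (intmul n x1)"]
  by (auto simp: diag_der_def Vop_def mmult_Mop_right fun_eq_iff)

lemma diag_der_Vinv:
  "diag_der (partial_sum (\<lambda>n. f (intmul n x1))) Vinv = msmult (-1) (mmult (Mop x1 f) Vinv)"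
  using partial_sum_step[of "\<lambda>n. f (intmul n x1)"]
  by (auto simp: diag_der_def Vinv_def msmult_def mmult_Mop_left fun_eq_iff algebra_simps)

lemma diag_der_conj_expL:
  "mmult (mmult (expL (- t)) (diag_der F (mmult (mmult (expL t) b) (expL (- t))))) (expL t)
   = diag_der F b"
proof (intro ext)
  fix i j
  have phase: "exp (\<i> * complex_of_real (- t) * of_int k) * exp (\<i> * complex_of_real t * of_int k) = 1"
    "exp (\<i> * complex_of_real t * of_int k) * exp (\<i> * complex_of_real (- t) * of_int k) = 1"
    for k by (simp_all flip: exp_add)
  show "mmult (mmult (expL (- t)) (diag_der F (mmult (mmult (expL t) b) (expL (- t)))))
      (expL t) i j = diag_der F b i j"
    apply (simp add: diag_der_def mmult_expL_left mmult_expL_right)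
    using phase(1)[of i] phase(2)[of j] by (simp add: algebra_simps)
qed

lemma diag_der_diff_mcomm_Mop:
  "msub (diag_der F b) (mcomm (Mop x1 h) b) = diag_der (\<lambda>n. F n - h (intmul n x1)) b"
  by (auto simp: msub_def mcomm_def mmult_Mop_left mmult_Mop_right diag_der_def fun_eq_iff
      algebra_simps)

lemma continuous_on_translate:
  fixes f :: "'g::{topological_group_add, ab_group_add} \<Rightarrow> 'b::topological_space"
  assumes "continuous_on UNIV f"
  shows "continuous_on UNIV (\<lambda>x. f (x + c))"
  by (rule continuous_on_compose2[OF assms]) (auto intro!: continuous_intros)

lemma compact_continuous_norm_bounded:
  fixes f :: "'g::topological_space \<Rightarrow> 'b::real_normed_vector"
  assumes "compact (UNIV :: 'g set)" "continuous_on UNIV f"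
  shows "\<exists>B. \<forall>x. norm (f x) \<le> B"
  using compact_imp_bounded[OF compact_continuous_image[OF assms(2,1)]]
  by (auto simp: bounded_iff)

text \<open>Uniform continuity: continuity at each point gives a neighbourhood \<open>V x\<close> of \<open>0\<close> with
  \<open>V x + V x\<close> inside the \<open>e/2\<close>-neighbourhood of \<open>x\<close>; finitely many translates \<open>x + V x\<close>
  cover the group, and \<open>U\<close> is the intersection of the corresponding \<open>V x\<close>.\<close>

lemma compact_group_uniformly_continuous:
  fixes f :: "'g::{topological_group_add, ab_group_add, t2_space} \<Rightarrow> complex"
  assumes cpt: "compact (UNIV :: 'g set)" and f: "continuous_on UNIV f" and e: "e > 0"
  shows "\<exists>U. open U \<and> 0 \<in> U \<and> (\<forall>x. \<forall>u\<in>U. cmod (f (x + u) - f x) < e)"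
proof -
  define W where "W x = (\<lambda>w. f (w + x)) -` ball (f x) (e / 2)" for x
  have "\<exists>V. open V \<and> 0 \<in> V \<and> (\<forall>a\<in>V. \<forall>b\<in>V. a + b \<in> W x)" for x
  proof -
    have "open ((\<lambda>p::'g \<times> 'g. fst p + snd p) -` W x)"
      unfolding W_def
      by (intro open_vimage continuous_on_translate f) (auto intro!: continuous_intros)
    moreover have "(0, 0) \<in> (\<lambda>p::'g \<times> 'g. fst p + snd p) -` W x" using e by (simp add: W_def)
    ultimately obtain A B where "open A" "open B" "(0, 0) \<in> A \<times> B"
      "A \<times> B \<subseteq> (\<lambda>p::'g \<times> 'g. fst p + snd p) -` W x"
      by (rule open_prod_elim)
    then show ?thesis by (intro exI[of _ "A \<inter> B"]) auto
  qed
  then obtain V where V: "\<And>x. open (V x)" "\<And>x. 0 \<in> V x"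
    "\<And>x a b. a \<in> V x \<Longrightarrow> b \<in> V x \<Longrightarrow> a + b \<in> W x"
    by metis
  have "y \<in> (\<Union>x. (\<lambda>y. y - x) -` V x)" for y
    using V(2)[of y] by (intro UN_I[of y]) auto
  then have cover: "UNIV \<subseteq> (\<Union>x. (\<lambda>y. y - x) -` V x)" by blast
  obtain C where C: "C \<subseteq> UNIV" "finite C" "UNIV \<subseteq> (\<Union>x\<in>C. (\<lambda>y. y - x) -` V x)"
    by (rule compactE_image[OF cpt _ cover]) (intro open_vimage V(1) continuous_intros)
  define U where "U = (\<Inter>x\<in>C. V x)"
  have "open U" unfolding U_def using C(2) V(1) by (intro open_INT) auto
  moreover have "0 \<in> U" unfolding U_def using V(2) by auto
  moreover have "cmod (f (x + u) - f x) < e" if u: "u \<in> U" for x u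
  proof -
    obtain y where y: "y \<in> C" "x - y \<in> V y" using C(3) by blast
    have "u \<in> V y" using u y(1) by (simp add: U_def)
    then have "x - y + u \<in> W y" by (rule V(3)[OF y(2)])
    moreover have "x - y + 0 \<in> W y" by (rule V(3)[OF y(2) V(2)])
    ultimately have "cmod (f (x + u) - f y) < e / 2" "cmod (f x - f y) < e / 2"
      by (simp_all add: W_def dist_norm norm_minus_commute)
    then show ?thesis using norm_triangle_ineq4[of "f (x + u) - f y" "f x - f y"] by simp
  qed
  ultimately show ?thesis by blast
qed

lemma dense_orbit_bounded_cover:
  fixes x1 :: "'g::{topological_group_add, ab_group_add}"
  assumes cpt: "compact (UNIV :: 'g set)"
    and dense: "closure (range (\<lambda>n::int. intmul n x1)) = UNIV"
    and U: "open U" "0 \<in> U"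
  shows "\<exists>K::nat. \<forall>d. \<exists>n. \<bar>n\<bar> \<le> int K \<and> d - intmul n x1 \<in> U"
proof -
  define P where "P n = (\<lambda>d. d - intmul n x1) -` U" for n
  have P: "open (P n)" for n
    unfolding P_def by (intro open_vimage U(1)) (auto intro!: continuous_intros)
  have cover: "UNIV \<subseteq> (\<Union>n. P n)"
  proof
    fix d :: 'g
    have "open ((\<lambda>z. d - z) -` U)" by (intro open_vimage U(1)) (auto intro!: continuous_intros)
    moreover have "d \<in> (\<lambda>z. d - z) -` U \<inter> closure (range (\<lambda>n::int. intmul n x1))"
      using U(2) dense by simp
    ultimately have "(\<lambda>z. d - z) -` U \<inter> range (\<lambda>n::int. intmul n x1) \<noteq> {}"
      using open_Int_closure_eq_empty by blast
    then show "d \<in> (\<Union>n. P n)" by (auto simp: P_def)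
  qed
  obtain N where N: "N \<subseteq> UNIV" "finite N" "UNIV \<subseteq> (\<Union>n\<in>N. P n)"
    by (rule compactE_image[OF cpt P cover])
  define K where "K = Max (insert 0 ((\<lambda>n. nat \<bar>n\<bar>) ` N))"
  have "\<exists>n. \<bar>n\<bar> \<le> int K \<and> d - intmul n x1 \<in> U" for d
  proof -
    obtain n where n: "n \<in> N" "d \<in> P n" using N(3) by blast
    have "nat \<bar>n\<bar> \<le> K" unfolding K_def using N(2) n(1) by (intro Max_ge) auto
    then show ?thesis using n(2) by (auto simp: P_def nat_le_iff)
  qed
  then show ?thesis by blast
qed

lemma haar_prob_space: "haar_prob \<mu> \<Longrightarrow> space \<mu> = UNIV"
  unfolding haar_prob_def using sets_eq_imp_space_eq[of \<mu> borel] by auto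

lemma haar_prob_measurable_continuous:
  fixes g :: "'g::{topological_group_add, ab_group_add} \<Rightarrow> 'b::topological_space"
  assumes "haar_prob \<mu>" "continuous_on UNIV g"
  shows "g \<in> borel_measurable \<mu>"
proof -
  have "measurable \<mu> (borel :: 'b measure) = measurable borel borel"
    using assms(1) by (intro measurable_cong_sets) (simp_all add: haar_prob_def)
  then show ?thesis using borel_measurable_continuous_onI[OF assms(2)] by simp
qed

lemma haar_prob_integrable_continuous:
  fixes g :: "'g::{topological_group_add, ab_group_add} \<Rightarrow> complex"
  assumes cpt: "compact (UNIV :: 'g set)" and h: "haar_prob \<mu>" and g: "continuous_on UNIV g"
  shows "integrable \<mu> g"
proof -
  interpret prob_space \<mu> using h by (simp add: haar_prob_def)
  obtain B where "\<And>x. cmod (g x) \<le> B" using compact_continuous_norm_bounded[OF cpt g] by blast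
  then show ?thesis
    by (intro integrable_const_bound[where B=B]) (use haar_prob_measurable_continuous[OF h g] in auto)
qed

lemma haar_prob_integral_translate:
  fixes g :: "'g::{topological_group_add, ab_group_add} \<Rightarrow> complex"
  assumes h: "haar_prob \<mu>" and g: "continuous_on UNIV g"
  shows "integral\<^sup>L \<mu> (\<lambda>x. g (x + c)) = integral\<^sup>L \<mu> g"
proof -
  have translate: "(\<lambda>x. x + c) \<in> measurable \<mu> \<mu>"
  proof -
    have "measurable \<mu> \<mu> = measurable (borel :: 'g measure) borel"
      using h by (intro measurable_cong_sets) (simp_all add: haar_prob_def)
    then show ?thesis
      by (simp add: borel_measurable_continuous_onI continuous_on_add continuous_on_id
          continuous_on_const)
  qed
  have "distr \<mu> \<mu> (\<lambda>x. x + c) = \<mu>"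
  proof (rule measure_eqI)
    fix A assume "A \<in> sets (distr \<mu> \<mu> (\<lambda>x. x + c))"
    then have A: "A \<in> sets \<mu>" by simp
    have "(\<lambda>x. x + c) -` A \<inter> space \<mu> = (\<lambda>x. - c + x) ` A"
      by (force simp: haar_prob_space[OF h] image_iff)
    moreover have "emeasure \<mu> ((\<lambda>x. - c + x) ` A) = emeasure \<mu> A"
      using h A unfolding haar_prob_def by blast
    ultimately show "emeasure (distr \<mu> \<mu> (\<lambda>x. x + c)) A = emeasure \<mu> A"
      using emeasure_distr[OF translate A] by simp
  qed simp
  then show ?thesis
    using integral_distr[OF translate haar_prob_measurable_continuous[OF h g]] by simp
qed

section \<open>Approximating mean-zero functions by coboundaries\<close>

definition orbit_average :: "nat \<Rightarrow> ('g::ab_group_add \<Rightarrow> complex) \<Rightarrow> 'g \<Rightarrow> 'g \<Rightarrow> complex" where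
  "orbit_average N f x1 x = (\<Sum>k<N. f (x + intmul (int k) x1)) / of_nat N"

definition orbit_transfer :: "nat \<Rightarrow> ('g::ab_group_add \<Rightarrow> complex) \<Rightarrow> 'g \<Rightarrow> 'g \<Rightarrow> complex" where
  "orbit_transfer N f x1 x = - (\<Sum>k<N. \<Sum>m<k. f (x + intmul (int m) x1)) / of_nat N"

lemma sum_orbit_shift:
  fixes f :: "'g::ab_group_add \<Rightarrow> 'a::ab_group_add"
  shows "(\<Sum>m<k. f (x + x1 + intmul (int m) x1)) - (\<Sum>m<k. f (x + intmul (int m) x1))
    = f (x + intmul (int k) x1) - f x"
proof -
  have shift: "x + x1 + intmul (int m) x1 = x + intmul (int (Suc m)) x1" for m
    using intmul_add_one[of "int m" x1] by (simp add: algebra_simps)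
  have "(\<Sum>m<k. f (x + x1 + intmul (int m) x1)) - (\<Sum>m<k. f (x + intmul (int m) x1))
      = (\<Sum>m<k. f (x + intmul (int (Suc m)) x1) - f (x + intmul (int m) x1))"
    unfolding shift by (rule sum_subtractf[symmetric])
  also have "\<dots> = f (x + intmul (int k) x1) - f (x + intmul (int 0) x1)"
    by (rule sum_lessThan_telescope)
  finally show ?thesis by (simp add: intmul_def)
qed

lemma orbit_transfer_coboundary:
  assumes "0 < N"
  shows "f x - (orbit_transfer N f x1 (x + x1) - orbit_transfer N f x1 x) = orbit_average N f x1 x"
proof -
  have "orbit_transfer N f x1 (x + x1) - orbit_transfer N f x1 x
      = - (\<Sum>k<N. (\<Sum>m<k. f (x + x1 + intmul (int m) x1)) - (\<Sum>m<k. f (x + intmul (int m) x1)))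
        / of_nat N"
    unfolding orbit_transfer_def by (simp add: diff_divide_distrib[symmetric] sum_subtractf)
  also have "\<dots> = - (\<Sum>k<N. f (x + intmul (int k) x1) - f x) / of_nat N"
    by (simp only: sum_orbit_shift)
  also have "\<dots> = f x - orbit_average N f x1 x"
    unfolding orbit_average_def using assms by (simp add: sum_subtractf field_simps)
  finally show ?thesis by simp
qed

lemma continuous_orbit_average:
  fixes f :: "'g::{topological_group_add, ab_group_add} \<Rightarrow> complex"
  assumes "continuous_on UNIV f"
  shows "continuous_on UNIV (orbit_average N f x1)"
  unfolding orbit_average_def
  by (cases "N = 0") (auto intro!: continuous_intros continuous_on_translate[OF assms])

lemma continuous_orbit_transfer:
  fixes f :: "'g::{topological_group_add, ab_group_add} \<Rightarrow> complex"
  assumes "continuous_on UNIV f"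
  shows "continuous_on UNIV (orbit_transfer N f x1)"
  unfolding orbit_transfer_def
  by (cases "N = 0") (auto intro!: continuous_intros continuous_on_translate[OF assms])

lemma orbit_average_step_bound:
  assumes "\<And>x. cmod (f x) \<le> B"
  shows "cmod (orbit_average N f x1 (x + x1) - orbit_average N f x1 x) \<le> 2 * B / real N"
proof -
  have "orbit_average N f x1 (x + x1) - orbit_average N f x1 x
      = (f (x + intmul (int N) x1) - f x) / of_nat N"
    unfolding orbit_average_def using sum_orbit_shift[of f x x1 N]
    by (simp add: diff_divide_distrib[symmetric])
  also have "cmod \<dots> = cmod (f (x + intmul (int N) x1) - f x) / real N"
    by (simp add: norm_divide)
  also have "\<dots> \<le> (B + B) / real N"
    using norm_triangle_ineq4[of "f (x + intmul (int N) x1)" "f x"] assms[of x]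
      assms[of "x + intmul (int N) x1"]
    by (intro divide_right_mono) auto
  finally show ?thesis by simp
qed

lemma orbit_average_translate_bound:
  assumes "\<And>x. cmod (f (x + u) - f x) \<le> e" "0 < N"
  shows "cmod (orbit_average N f x1 (z + u) - orbit_average N f x1 z) \<le> e"
proof -
  let ?z = "\<lambda>k. z + intmul (int k) x1"
  have "orbit_average N f x1 (z + u) - orbit_average N f x1 z
      = (\<Sum>k<N. f (?z k + u) - f (?z k)) / of_nat N"
    unfolding orbit_average_def by (simp add: diff_divide_distrib[symmetric] sum_subtractf algebra_simps)
  also have "cmod \<dots> \<le> (\<Sum>k<N. cmod (f (?z k + u) - f (?z k))) / real N"
    unfolding norm_divide norm_of_nat by (intro divide_right_mono norm_sum) simp
  also have "\<dots> \<le> (\<Sum>k<N. e) / real N"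
    using assms(1) by (intro divide_right_mono sum_mono) simp_all
  also have "\<dots> = e" using assms(2) by simp
  finally show ?thesis .
qed

text \<open>Any \<open>y - x\<close> is within a uniform-continuity neighbourhood of some \<open>n x\<^sub>1\<close> with
  \<open>|n| \<le> K\<close>, and the average moves by at most \<open>2B/N\<close> per step along the orbit.\<close>

lemma orbit_average_oscillation:
  fixes f :: "'g::{topological_group_add, ab_group_add, t2_space} \<Rightarrow> complex"
  assumes cpt: "compact (UNIV :: 'g set)"
    and dense: "closure (range (\<lambda>n::int. intmul n x1)) = UNIV"
    and f: "continuous_on UNIV f" and e: "0 < e"
  shows "\<exists>N>0. \<forall>x y. cmod (orbit_average N f x1 y - orbit_average N f x1 x) \<le> e"
proof -
  obtain B where B: "\<And>x. cmod (f x) \<le> B" using compact_continuous_norm_bounded[OF cpt f] by blast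
  have B0: "0 \<le> B" using B[of 0] by (meson norm_ge_zero order_trans)
  obtain U where U: "open U" "0 \<in> U" "\<And>x u. u \<in> U \<Longrightarrow> cmod (f (x + u) - f x) < e / 2"
    using compact_group_uniformly_continuous[OF cpt f, of "e / 2"] e by auto
  obtain K where K: "\<And>d. \<exists>n. \<bar>n\<bar> \<le> int K \<and> d - intmul n x1 \<in> U"
    using dense_orbit_bounded_cover[OF cpt dense U(1,2)] by blast
  obtain N :: nat where N: "4 * real K * B / e < real N" using reals_Archimedean2 by blast
  have "0 \<le> 4 * real K * B / e" using B0 e by simp
  then have N0: "0 < N" using N by linarith
  have KBN: "real K * (2 * B / real N) \<le> e / 2"
    using N e N0 by (simp add: field_simps)
  let ?A = "orbit_average N f x1"
  have step: "cmod (?A (x + intmul (m + 1) x1) - ?A (x + intmul m x1)) \<le> 2 * B / real N" for x m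
    using orbit_average_step_bound[OF B, where N=N and ?x1.0=x1 and x="x + intmul m x1"]
    by (simp add: intmul_add_one add.assoc)
  have "cmod (?A y - ?A x) \<le> e" for x y
  proof -
    obtain n where n: "\<bar>n\<bar> \<le> int K" "y - x - intmul n x1 \<in> U" using K by blast
    let ?z = "x + intmul n x1"
    have "cmod (?A (?z + (y - x - intmul n x1)) - ?A ?z) \<le> e / 2"
      using U(3)[OF n(2)] N0 by (intro orbit_average_translate_bound) (auto intro: less_imp_le)
    then have near: "cmod (?A y - ?A ?z) \<le> e / 2" by simp
    have "cmod (?A ?z - ?A (x + intmul 0 x1)) \<le> real_of_int \<bar>n - 0\<bar> * (2 * B / real N)"
      using step by (rule norm_diff_le_of_steps)
    also have "\<dots> \<le> real K * (2 * B / real N)"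
      using n(1) B0 by (intro mult_right_mono) auto
    finally have far: "cmod (?A ?z - ?A x) \<le> e / 2"
      using KBN by (simp add: intmul_def)
    show ?thesis using norm_triangle_ineq[of "?A y - ?A ?z" "?A ?z - ?A x"] near far by simp
  qed
  then show ?thesis using N0 by blast
qed

lemma integral_orbit_average:
  fixes f :: "'g::{topological_group_add, ab_group_add} \<Rightarrow> complex"
  assumes cpt: "compact (UNIV :: 'g set)" and h: "haar_prob \<mu>"
    and f: "continuous_on UNIV f" and N: "0 < N"
  shows "integral\<^sup>L \<mu> (orbit_average N f x1) = integral\<^sup>L \<mu> f"
proof -
  have "integral\<^sup>L \<mu> (orbit_average N f x1)
      = (\<Sum>k<N. integral\<^sup>L \<mu> (\<lambda>x. f (x + intmul (int k) x1))) / of_nat N"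
    unfolding orbit_average_def integral_divide_zero
    by (simp add: Bochner_Integration.integral_sum haar_prob_integrable_continuous[OF cpt h]
        continuous_on_translate[OF f])
  also have "\<dots> = integral\<^sup>L \<mu> f" using haar_prob_integral_translate[OF h f] N by simp
  finally show ?thesis .
qed

lemma norm_le_of_integral_zero:
  fixes g :: "'a \<Rightarrow> complex"
  assumes "prob_space M" "integrable M g" "integral\<^sup>L M g = 0"
    and "\<And>x y. cmod (g x - g y) \<le> e"
  shows "cmod (g x) \<le> e"
proof -
  interpret prob_space M by fact
  have "g x = integral\<^sup>L M (\<lambda>y. g x - g y)" using assms(2,3) by (simp add: prob_space)
  also have "cmod \<dots> \<le> integral\<^sup>L M (\<lambda>y. cmod (g x - g y))" by (rule integral_norm_bound)
  also have "\<dots> \<le> e"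
    using assms(2,4) by (intro integral_le_const) (auto intro!: integrable_norm)
  finally show ?thesis .
qed

text \<open>The orbit averages have small oscillation and, since \<open>\<integral>f = 0\<close>, mean zero, so they are
  uniformly small; \<open>f\<close> differs from them by the coboundary of \<open>orbit_transfer\<close>.\<close>

lemma mean_zero_approx_coboundary:
  fixes f :: "'g::{topological_group_add, ab_group_add, t2_space} \<Rightarrow> complex"
  assumes cpt: "compact (UNIV :: 'g set)" and haar: "haar_prob \<mu>"
    and dense: "closure (range (\<lambda>n::int. intmul n x1)) = UNIV"
    and f: "continuous_on UNIV f" and f0: "integral\<^sup>L \<mu> f = 0" and e: "0 < e"
  shows "\<exists>h. continuous_on UNIV h \<and> (\<forall>x. cmod (f x - (h (x + x1) - h x)) \<le> e)"
proof -
  obtain N where N: "0 < N" "\<And>x y. cmod (orbit_average N f x1 y - orbit_average N f x1 x) \<le> e"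
    using orbit_average_oscillation[OF cpt dense f e] by blast
  have "cmod (orbit_average N f x1 x) \<le> e" for x
  proof (rule norm_le_of_integral_zero[where g="orbit_average N f x1"])
    show "prob_space \<mu>" using haar by (simp add: haar_prob_def)
    show "integrable \<mu> (orbit_average N f x1)"
      by (intro haar_prob_integrable_continuous[OF cpt haar] continuous_orbit_average f)
    show "integral\<^sup>L \<mu> (orbit_average N f x1) = 0"
      using integral_orbit_average[OF cpt haar f N(1)] f0 by simp
  qed (rule N(2))
  then show ?thesis
    using continuous_orbit_transfer[OF f] orbit_transfer_coboundary[OF N(1)] by metis
qed

inductive_set alg_gen :: "mat set \<Rightarrow> mat set" for S :: "mat set" where
  gen: "A \<in> S \<Longrightarrow> A \<in> alg_gen S"
| add: "A \<in> alg_gen S \<Longrightarrow> B \<in> alg_gen S \<Longrightarrow> madd A B \<in> alg_gen S"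
| smult: "A \<in> alg_gen S \<Longrightarrow> msmult c A \<in> alg_gen S"
| mult: "A \<in> alg_gen S \<Longrightarrow> B \<in> alg_gen S \<Longrightarrow> mmult A B \<in> alg_gen S"

lemma alg_gen_subset_star_alg: "alg_gen S \<subseteq> star_alg S"
proof
  fix A assume "A \<in> alg_gen S"
  then show "A \<in> star_alg S" by induction (auto intro: star_alg.intros)
qed

lemma madj_mmult: "madj (mmult A B) = mmult (madj B) (madj A)"
  unfolding madj_def mmult_def by (intro ext) (simp flip: infsum_cnj add: mult.commute)

lemma madj_madd: "madj (madd A B) = madd (madj A) (madj B)"
  by (auto simp: madj_def madd_def)

lemma madj_msmult: "madj (msmult c A) = msmult (cnj c) (madj A)"
  by (auto simp: madj_def msmult_def)

lemma madj_madj: "madj (madj A) = A"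
  by (auto simp: madj_def)

lemma madj_Vop: "madj Vop = Vinv"
  by (auto simp: madj_def Vop_def Vinv_def fun_eq_iff)

lemma madj_Vinv: "madj Vinv = Vop"
  by (auto simp: madj_def Vop_def Vinv_def fun_eq_iff)

lemma madj_Mop: "madj (Mop x1 g) = Mop x1 (\<lambda>x. cnj (g x))"
  by (auto simp: madj_def Mop_def fun_eq_iff)

lemma star_alg_eq_alg_gen:
  assumes "\<And>A. A \<in> S \<Longrightarrow> madj A \<in> S"
  shows "star_alg S = alg_gen S"
proof
  have "A \<in> alg_gen S \<and> madj A \<in> alg_gen S" if "A \<in> star_alg S" for A
    using that
  proof induction
    case (gen A)
    then show ?case using assms by (auto intro: alg_gen.gen)
  next
    case (add A B)
    then show ?case by (auto simp: madj_madd intro: alg_gen.add)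
  next
    case (smult A c)
    then show ?case by (auto simp: madj_msmult intro: alg_gen.smult)
  next
    case (mult A B)
    then show ?case by (auto simp: madj_mmult intro: alg_gen.mult)
  next
    case (adj A)
    then show ?case by (auto simp: madj_madj)
  qed
  then show "star_alg S \<subseteq> alg_gen S" by blast
qed (rule alg_gen_subset_star_alg)

lemma derivation_eq_on_alg_gen:
  assumes "is_derivation D E \<delta>" "is_derivation D E \<delta>'" "alg_gen S \<subseteq> D"
    and "\<And>a. a \<in> S \<Longrightarrow> \<delta> a = \<delta>' a" "A \<in> alg_gen S"
  shows "\<delta> A = \<delta>' A"
  using assms(5)
proof induction
  case (gen A)
  then show ?case by (rule assms(4))
next
  case (add A B)
  then have "A \<in> D" "B \<in> D" using assms(3) by auto
  with add.IH show ?case using assms(1,2) by (simp add: is_derivation_def)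
next
  case (smult A c)
  then have "A \<in> D" using assms(3) by auto
  with smult.IH show ?case using assms(1,2) by (simp add: is_derivation_def)
next
  case (mult A B)
  then have "A \<in> D" "B \<in> D" using assms(3) by auto
  with mult.IH show ?case using assms(1,2) by (simp add: is_derivation_def)
qed

lemma band_mat_star_alg_in_cstar_alg:
  assumes "band_mat A" "A \<in> star_alg S"
  shows "A \<in> cstar_alg S"
proof -
  have "(\<lambda>n. opnorm (msub A A)) \<longlonglongrightarrow> 0" by (simp add: msub_def opnorm_zero)
  with assms show ?thesis
    unfolding cstar_alg_def by (auto intro!: exI[of _ "\<lambda>_. A"] bounded_mat_band_mat)
qed

definition Balg_gens :: "'g::{topological_group_add, ab_group_add} \<Rightarrow> mat set" where
  "Balg_gens x1 = {Vop} \<union> {Mop x1 f | f. continuous_on UNIV f}"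

definition Bsmall_gens :: "'g::{topological_group_add, ab_group_add} \<Rightarrow> mat set" where
  "Bsmall_gens x1 = {Vop, Vinv} \<union> {Mop x1 ch | ch. is_character ch}"

lemma Bsmall_eq_alg_gen: "Bsmall x1 = alg_gen (Bsmall_gens x1)"
proof -
  have "madj A \<in> Bsmall_gens x1" if "A \<in> Bsmall_gens x1" for A
    using that unfolding Bsmall_gens_def
    by (auto simp: madj_Vop madj_Vinv madj_Mop is_character_def intro: continuous_intros)
  then show ?thesis unfolding Bsmall_def Bsmall_gens_def[symmetric] by (rule star_alg_eq_alg_gen)
qed

lemma Bsmall_subset_star_alg: "Bsmall x1 \<subseteq> star_alg (Balg_gens x1)"
proof
  fix A assume "A \<in> Bsmall x1"
  then show "A \<in> star_alg (Balg_gens x1)" unfolding Bsmall_def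
  proof induction
    case (gen A)
    have "Vinv \<in> star_alg (Balg_gens x1)"
      unfolding madj_Vop[symmetric] by (intro star_alg.adj star_alg.gen) (simp add: Balg_gens_def)
    with gen show ?case by (auto simp: Balg_gens_def is_character_def intro: star_alg.gen)
  qed (auto intro: star_alg.intros)
qed

lemma band_mat_star_alg_Balg_gens:
  fixes x1 :: "'g::{topological_group_add, ab_group_add, t2_space}"
  assumes cpt: "compact (UNIV :: 'g set)" and "A \<in> star_alg (Balg_gens x1)"
  shows "band_mat A"
  using assms(2)
proof induction
  case (gen A)
  then consider "A = Vop" | g where "A = Mop x1 g" "continuous_on UNIV g"
    by (auto simp: Balg_gens_def)
  then show ?case
  proof cases
    case 1
    then show ?thesis by (simp add: band_mat_Vop)
  next
    case (2 g)
    then obtain B where "\<And>x. cmod (g x) \<le> B" using compact_continuous_norm_bounded[OF cpt] by blast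
    then show ?thesis unfolding 2 by (rule band_mat_Mop)
  qed
qed (auto intro: band_mat_madd band_mat_msmult band_mat_mmult band_mat_madj)

lemma band_mat_Bsmall:
  fixes x1 :: "'g::{topological_group_add, ab_group_add, t2_space}"
  assumes "compact (UNIV :: 'g set)" "A \<in> Bsmall x1"
  shows "band_mat A"
  using assms Bsmall_subset_star_alg band_mat_star_alg_Balg_gens by blast

lemma star_alg_Balg_gens_subset_Balg:
  fixes x1 :: "'g::{topological_group_add, ab_group_add, t2_space}"
  assumes "compact (UNIV :: 'g set)"
  shows "star_alg (Balg_gens x1) \<subseteq> Balg x1"
  unfolding Balg_def Balg_gens_def[symmetric]
  using band_mat_star_alg_Balg_gens[OF assms] band_mat_star_alg_in_cstar_alg by blast

lemma character_in_trig_polys: "is_character ch \<Longrightarrow> ch \<in> trig_polys"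
  unfolding trig_polys_def by (rule CollectI, rule exI[of _ "{ch}"], rule exI[of _ "\<lambda>_. 1"]) simp

lemma derivation_Bsmall_unique:
  assumes "is_derivation (Bsmall x1) E \<delta>" "is_derivation (Bsmall x1) E \<delta>'"
    and "\<delta> Vop = \<delta>' Vop" "\<delta> Vinv = \<delta>' Vinv"
    and "\<And>ch. is_character ch \<Longrightarrow> \<delta> (Mop x1 ch) = \<delta>' (Mop x1 ch)"
    and "b \<in> Bsmall x1"
  shows "\<delta> b = \<delta>' b"
proof (rule derivation_eq_on_alg_gen[OF assms(1,2), where S = "Bsmall_gens x1"])
  show "alg_gen (Bsmall_gens x1) \<subseteq> Bsmall x1" "b \<in> alg_gen (Bsmall_gens x1)"
    using assms(6) by (simp_all add: Bsmall_eq_alg_gen)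
  show "\<delta> a = \<delta>' a" if "a \<in> Bsmall_gens x1" for a
    using that assms(3-5) by (auto simp: Bsmall_gens_def)
qed

section \<open>The derivation \<open>\<delta>\<^sub>f\<close>\<close>

lemma is_derivation_diag_der:
  fixes f :: "'g::{topological_group_add, ab_group_add, t2_space} \<Rightarrow> complex"
  assumes cpt: "compact (UNIV :: 'g set)" and f: "continuous_on UNIV f"
  shows "is_derivation (Bsmall x1) (Balg x1) (diag_der (partial_sum (\<lambda>n. f (intmul n x1))))"
proof -
  let ?\<delta> = "diag_der (partial_sum (\<lambda>n. f (intmul n x1)))"
  have banded: "\<exists>K. banded K a" if "a \<in> Bsmall x1" for a
    using band_mat_Bsmall[OF cpt that] by (auto simp: band_mat_def)
  have V: "Vop \<in> star_alg (Balg_gens x1)" and M: "Mop x1 f \<in> star_alg (Balg_gens x1)"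
    using f by (auto simp: Balg_gens_def intro: star_alg.gen)
  have "?\<delta> a \<in> star_alg (Balg_gens x1)" if "a \<in> alg_gen (Bsmall_gens x1)" for a
    using that
  proof induction
    case (gen a)
    have "?\<delta> Vinv \<in> star_alg (Balg_gens x1)"
      unfolding diag_der_Vinv unfolding madj_Vop[symmetric]
      by (intro star_alg.smult star_alg.mult M star_alg.adj V)
    moreover have "(\<lambda>i j. 0) = msmult 0 Vop" by (simp add: msmult_def)
    ultimately show ?case
      using gen V M star_alg.smult[OF V, of 0]
      by (auto simp: Bsmall_gens_def diag_der_Vop diag_der_Mop intro: star_alg.mult)
  next
    case (mult a b)
    then have "a \<in> star_alg (Balg_gens x1)" "b \<in> star_alg (Balg_gens x1)"
      using Bsmall_subset_star_alg Bsmall_eq_alg_gen by blast+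
    moreover obtain K where "banded K a" using banded mult(1) Bsmall_eq_alg_gen by blast
    ultimately show ?case
      using mult.IH by (simp add: diag_der_mmult star_alg.add star_alg.mult)
  qed (auto simp: diag_der_madd diag_der_msmult intro: star_alg.intros)
  then have "?\<delta> a \<in> Balg x1" if "a \<in> Bsmall x1" for a
    using that star_alg_Balg_gens_subset_Balg[OF cpt] Bsmall_eq_alg_gen by blast
  moreover have "?\<delta> (mmult a b) = madd (mmult (?\<delta> a) b) (mmult a (?\<delta> b))"
    if "a \<in> Bsmall x1" for a b
    using banded[OF that] diag_der_mmult by blast
  ultimately show ?thesis
    unfolding is_derivation_def by (simp add: diag_der_madd diag_der_msmult)
qed

lemma invariant_der_diag_der: "invariant_der D (diag_der F)"
  by (simp add: invariant_der_def diag_der_conj_expL)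

text \<open>\<open>\<delta>\<^sub>f(b) - [M\<^sub>h, b]\<close> is the entrywise commutator with a diagonal whose increments
  \<open>f - (h(\<cdot> + x\<^sub>1) - h)\<close> are uniformly small.\<close>

lemma approx_inner_diag_der:
  fixes f :: "'g::{topological_group_add, ab_group_add, t2_space} \<Rightarrow> complex"
  assumes cpt: "compact (UNIV :: 'g set)" and haar: "haar_prob \<mu>"
    and dense: "closure (range (\<lambda>n::int. intmul n x1)) = UNIV"
    and f: "continuous_on UNIV f" and f0: "integral\<^sup>L \<mu> f = 0"
  shows "approx_inner (Bsmall x1) (Balg x1) (diag_der (partial_sum (\<lambda>n. f (intmul n x1))))"
proof -
  let ?\<delta> = "diag_der (partial_sum (\<lambda>n. f (intmul n x1)))"
  have "\<forall>j::nat. \<exists>h. continuous_on UNIV h \<and> (\<forall>x. cmod (f x - (h (x + x1) - h x)) \<le> 1 / real (Suc j))"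
    using mean_zero_approx_coboundary[OF cpt haar dense f f0] by simp
  then obtain h where h: "\<And>j. continuous_on UNIV (h j)"
    "\<And>j x. cmod (f x - (h j (x + x1) - h j x)) \<le> 1 / real (Suc j)"
    by metis
  have "Mop x1 (h j) \<in> star_alg (Balg_gens x1)" for j
    by (rule star_alg.gen) (use h(1) in \<open>auto simp: Balg_gens_def\<close>)
  then have "Mop x1 (h j) \<in> Balg x1" for j
    using star_alg_Balg_gens_subset_Balg[OF cpt] by blast
  moreover have "(\<lambda>j. opnorm (msub (?\<delta> b) (mcomm (Mop x1 (h j)) b))) \<longlonglongrightarrow> 0"
    if b: "b \<in> Bsmall x1" for b
  proof -
    obtain K C where KC: "banded K b" "entries_bounded C b"
      using band_mat_Bsmall[OF cpt b] by (auto simp: band_mat_def)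
    define G where "G j = (\<lambda>n. partial_sum (\<lambda>n. f (intmul n x1)) n - h j (intmul n x1))" for j
    have step: "cmod (G j (n + 1) - G j n) \<le> 1 / real (Suc j)" for j n
    proof -
      have "G j (n + 1) - G j n = f (intmul n x1) - (h j (intmul n x1 + x1) - h j (intmul n x1))"
        using partial_sum_step[of "\<lambda>n. f (intmul n x1)" n] unfolding G_def intmul_add_one
        by (simp add: algebra_simps)
      then show ?thesis using h(2) by simp
    qed
    define D where "D = real (2 * K + 1) * (real K * C)"
    have bounds: "0 \<le> opnorm (diag_der (G j) b)" "opnorm (diag_der (G j) b) \<le> D / real (Suc j)"
      for j
    proof -
      have "banded K (diag_der (G j) b)" using KC(1) by (auto simp: banded_def diag_der_def)
      moreover have "entries_bounded (real K * (1 / real (Suc j)) * C) (diag_der (G j) b)"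
        using step KC by (rule entries_bounded_diag_der)
      ultimately show "0 \<le> opnorm (diag_der (G j) b)"
        and "opnorm (diag_der (G j) b) \<le> D / real (Suc j)"
        using bounded_mat_banded opnorm_nonneg opnorm_le_banded[of K _ "real K * (1 / real (Suc j)) * C"]
        by (auto simp: D_def)
    qed
    have lim: "(\<lambda>j. D / real (Suc j)) \<longlonglongrightarrow> 0"
      using lim_const_over_n[of D] LIMSEQ_Suc by blast
    show ?thesis
      unfolding diag_der_diff_mcomm_Mop G_def[symmetric]
      by (rule tendsto_sandwich[OF _ _ tendsto_const lim]) (use bounds in auto)
  qed
  ultimately show ?thesis unfolding approx_inner_def by (intro exI[of _ "\<lambda>j. Mop x1 (h j)"]) auto
qed

theorem lemma3p12:
  fixes \<mu> :: "'g::{topological_group_add, ab_group_add, t2_space} measure"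
    and x1 :: 'g
    and f :: "'g \<Rightarrow> complex"
  assumes "compact (UNIV :: 'g set)"
    and "infinite (UNIV :: 'g set)"
    and "haar_prob \<mu>"
    and "closure (range (\<lambda>n::int. intmul n x1)) = UNIV"
    and "continuous_on UNIV f"
    and "integral\<^sup>L \<mu> f = 0"
  shows "\<exists>\<delta>. is_derivation (Bsmall x1) (Balg x1) \<delta> \<and>
             \<delta> Vop = mmult Vop (Mop x1 f) \<and>
             \<delta> Vinv = msmult (-1) (mmult (Mop x1 f) Vinv) \<and>
             (\<forall>g\<in>trig_polys. \<delta> (Mop x1 g) = (\<lambda>i j. 0)) \<and>
             (\<forall>\<delta>'. (is_derivation (Bsmall x1) (Balg x1) \<delta>' \<and>
                    \<delta>' Vop = mmult Vop (Mop x1 f) \<and>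
                    \<delta>' Vinv = msmult (-1) (mmult (Mop x1 f) Vinv) \<and>
                    (\<forall>g\<in>trig_polys. \<delta>' (Mop x1 g) = (\<lambda>i j. 0)))
                   \<longrightarrow> (\<forall>b\<in>Bsmall x1. \<delta>' b = \<delta> b)) \<and>
             approx_inner (Bsmall x1) (Balg x1) \<delta> \<and>
             invariant_der (Bsmall x1) \<delta>"
proof -
  let ?\<delta> = "diag_der (partial_sum (\<lambda>n. f (intmul n x1)))"
  have der: "is_derivation (Bsmall x1) (Balg x1) ?\<delta>"
    using assms(1,5) by (rule is_derivation_diag_der)
  have gens: "?\<delta> Vop = mmult Vop (Mop x1 f)" "?\<delta> Vinv = msmult (-1) (mmult (Mop x1 f) Vinv)"
    "\<forall>g\<in>trig_polys. ?\<delta> (Mop x1 g) = (\<lambda>i j. 0)"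
    by (simp_all add: diag_der_Vop diag_der_Vinv diag_der_Mop)
  have unique: "\<delta>' b = ?\<delta> b"
    if \<delta>': "is_derivation (Bsmall x1) (Balg x1) \<delta>'" "\<delta>' Vop = mmult Vop (Mop x1 f)"
      "\<delta>' Vinv = msmult (-1) (mmult (Mop x1 f) Vinv)" "\<forall>g\<in>trig_polys. \<delta>' (Mop x1 g) = (\<lambda>i j. 0)"
    and b: "b \<in> Bsmall x1" for \<delta>' b
  proof (rule derivation_Bsmall_unique[OF \<delta>'(1) der _ _ _ b])
    show "\<delta>' Vop = ?\<delta> Vop" "\<delta>' Vinv = ?\<delta> Vinv" using \<delta>'(2,3) gens(1,2) by simp_all
    show "\<delta>' (Mop x1 ch) = ?\<delta> (Mop x1 ch)" if "is_character ch" for ch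
      using \<delta>'(4) gens(3) character_in_trig_polys[OF that] by simp
  qed
  show ?thesis
    using unique
    by (intro exI[of _ ?\<delta>] conjI der gens approx_inner_diag_der[OF assms(1,3-6)]
        invariant_der_diag_der allI impI ballI) (elim conjE, blast)
qed

end
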